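(* Let $K$ be a field of characteristic $0$ and let $f\in K[x_1,\ldots,x_n]$ be a homogeneous polynomial of degree $d$. The following two properties are equivalent: (i) $f$ is a monomial (times a nonzero constant) which depends on all of its $n$ variables; (ii) the Lie algebra $\mathfrak{g}_f$ is an $(n-1)$-dimensional subspace of the space of diagonal $n\times n$ matrices.
   Context: For $P\in K[x_1,\ldots,x_n]$, the Lie algebra $\mathfrak{g}_P$ of $P$ is the Lie algebra (tangent space at the identity) of the group of invariants $\{A\in GL_n(K): P(A.x)=P(x)\}$; equivalently, $\mathfrak{g}_P$ is the linear subspace of matrices $A=(a_{ij})\in M_n(K)$ such that $\sum_{i,j\in[n]} a_{ij}\,x_j\,\frac{\partial P}{\partial x_i}=0$. *)

theory Defs
  imports "HOL-Analysis.Analysis"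
begin

text \<open>A polynomial in the variables x_i (i ranging over the finite type 'n) with
coefficients in 'a is represented by its coefficient function: P m is the coefficient
of the monomial with exponent vector m.\<close>

type_synonym ('a, 'n) mpoly_fun = "('n \<Rightarrow> nat) \<Rightarrow> 'a"

definition is_mpoly :: "('a::zero, 'n) mpoly_fun \<Rightarrow> bool" where
  "is_mpoly P \<longleftrightarrow> finite {m. P m \<noteq> 0}"

definition homogeneous_of_degree :: "('a::zero, 'n::finite) mpoly_fun \<Rightarrow> nat \<Rightarrow> bool" where
  "homogeneous_of_degree P d \<longleftrightarrow> (\<forall>m. P m \<noteq> 0 \<longrightarrow> (\<Sum>i\<in>UNIV. m i) = d)"

definition pderiv_var :: "'n \<Rightarrow> ('a::semiring_1, 'n) mpoly_fun \<Rightarrow> ('a, 'n) mpoly_fun" where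
  "pderiv_var i P = (\<lambda>m. of_nat (m i + 1) * P (m(i := m i + 1)))"

definition mult_var :: "'n \<Rightarrow> ('a::zero, 'n) mpoly_fun \<Rightarrow> ('a, 'n) mpoly_fun" where
  "mult_var j P = (\<lambda>m. if m j = 0 then 0 else P (m(j := m j - 1)))"

definition monomial_fun :: "'a::zero \<Rightarrow> ('n \<Rightarrow> nat) \<Rightarrow> ('a, 'n) mpoly_fun" where
  "monomial_fun c a = (\<lambda>m. if m = a then c else 0)"

text \<open>n x n matrices over 'a (n = CARD('n)) are represented as vectors indexed by 'n \<times> 'n,
A $ (i, j) being the (i,j) entry, so that the library vector space structure
over the field 'a (vec.dim, vec.subspace, ...) applies.\<close>

definition lie_algebra :: "('a::comm_ring_1, 'n::finite) mpoly_fun \<Rightarrow> ('a ^ ('n \<times> 'n)) set" where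
  "lie_algebra P = {A. \<forall>m. (\<Sum>i\<in>UNIV. \<Sum>j\<in>UNIV. A $ (i, j) * mult_var j (pderiv_var i P) m) = 0}"

definition diagonal_matrices :: "('a::zero ^ ('n::finite \<times> 'n)) set" where
  "diagonal_matrices = {A. \<forall>i j. i \<noteq> j \<longrightarrow> A $ (i, j) = 0}"

end

theory Submission
  imports Defs
begin

(* For a diagonal matrix D, Euler's identity x_i d/dx_i x^m = m_i x^m turns the Lie algebra
   condition into <diag D, m> f_m = 0 for every exponent m in the support of f: the diagonal
   part of g_f is the annihilator of the support inside the n-dimensional space of diagonal
   matrices. A single nonzero exponent cuts out a hyperplane, two distinct exponents of the
   same degree are not proportional and cut out less, and a constant f leaves all of it.
   So (ii) forces f = c x^a with a \<noteq> 0. For a monomial, a matrix in g_f must have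
   A_ij a_i = 0 for i \<noteq> j (look at the coefficient of x^(a - e_i + e_j)), while
   a_i = 0 puts every E_ij into g_f; hence g_f is diagonal iff all a_i are positive. *)

type_synonym ('a, 'n) square_matrix = "'a ^ ('n \<times> 'n)"

definition diagonal_weight ::
    "('a::semiring_1, 'n::finite) square_matrix \<Rightarrow> ('n \<Rightarrow> nat) \<Rightarrow> 'a" where
  "diagonal_weight D m = (\<Sum>i\<in>UNIV. D $ (i, i) * of_nat (m i))"

definition diagonal_annihilator ::
    "('n::finite \<Rightarrow> nat) set \<Rightarrow> ('a::field, 'n) square_matrix set" where
  "diagonal_annihilator T = {D \<in> diagonal_matrices. \<forall>m\<in>T. diagonal_weight D m = 0}"

lemma diagonal_weight_diff [simp]:
  fixes D E :: "('a::ring_1, 'n::finite) square_matrix"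
  shows "diagonal_weight (D - E) m = diagonal_weight D m - diagonal_weight E m"
  by (simp add: diagonal_weight_def left_diff_distrib sum_subtractf)

lemma diagonal_weight_scale [simp]: "diagonal_weight (c *s D) m = c * diagonal_weight D m"
  by (simp add: diagonal_weight_def sum_distrib_left algebra_simps)

lemma diagonal_weight_axis [simp]: "diagonal_weight (axis (k, k) c) m = c * of_nat (m k)"
proof -
  have "diagonal_weight (axis (k, k) c) m = (\<Sum>i\<in>UNIV. if i = k then c * of_nat (m i) else 0)"
    unfolding diagonal_weight_def by (rule sum.cong) (auto simp: axis_def)
  then show ?thesis by simp
qed

lemma diagonal_weight_zero_exponent [simp]: "diagonal_weight D (\<lambda>_. 0) = 0"
  by (simp add: diagonal_weight_def)

lemma vec_subspace_diagonal_annihilator: "vec.subspace (diagonal_annihilator T)"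
  unfolding vec.subspace_def diagonal_annihilator_def diagonal_matrices_def diagonal_weight_def
  by (auto simp: sum.distrib algebra_simps sum_distrib_left[symmetric])

lemma diagonal_annihilator_antimono:
  "S \<subseteq> T \<Longrightarrow> diagonal_annihilator T \<subseteq> diagonal_annihilator S"
  unfolding diagonal_annihilator_def by auto

lemma diagonal_annihilator_empty [simp]: "diagonal_annihilator {} = diagonal_matrices"
  by (simp add: diagonal_annihilator_def)

lemma vec_dim_diagonal_matrices:
  "vec.dim (diagonal_matrices :: ('a::field, 'n::finite) square_matrix set) = CARD('n)"
proof -
  have "x \<notin> range (\<lambda>i. (i, i)) \<longleftrightarrow> fst x \<noteq> snd x" for x :: "'n \<times> 'n"
    by (cases x) auto
  then have eq: "diagonal_matrices =
      {D :: ('a, 'n) square_matrix. \<forall>x. x \<notin> range (\<lambda>i. (i, i)) \<longrightarrow> D $ x = 0}"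
    by (auto simp: diagonal_matrices_def)
  show ?thesis
    unfolding eq dim_substandard_cart by (simp add: card_image inj_on_def)
qed

lemma vec_dim_diagonal_annihilator_less:
  assumes "diagonal_annihilator T \<subset> (diagonal_annihilator S :: ('a::field, 'n::finite) square_matrix set)"
  shows "vec.dim (diagonal_annihilator T :: ('a, 'n) square_matrix set)
    < vec.dim (diagonal_annihilator S :: ('a, 'n) square_matrix set)"
proof (rule ccontr)
  assume "\<not> ?thesis"
  then have "diagonal_annihilator T = (diagonal_annihilator S :: ('a, 'n) square_matrix set)"
    using assms by (intro vec.subspace_dim_equal vec_subspace_diagonal_annihilator) auto
  with assms show False by simp
qed

lemma vec_dim_diagonal_annihilator_singleton:
  fixes a :: "'n::finite \<Rightarrow> nat"
  assumes "a \<noteq> (\<lambda>_. 0)"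
  shows "vec.dim (diagonal_annihilator {a} :: ('a::field_char_0, 'n) square_matrix set)
    = CARD('n) - 1"
proof -
  let ?H = "diagonal_annihilator {a} :: ('a, 'n) square_matrix set"
  obtain k where k: "a k \<noteq> 0" using assms by auto
  define E :: "('a, 'n) square_matrix" where "E = axis (k, k) 1"
  have E: "E \<in> diagonal_matrices" "diagonal_weight E a \<noteq> 0"
    using k by (simp_all add: E_def) (simp add: diagonal_matrices_def axis_def)
  have "E \<notin> ?H"
    using E by (simp add: diagonal_annihilator_def)
  then have "?H \<subset> diagonal_annihilator {}"
    using E(1) diagonal_annihilator_antimono[of "{}" "{a}"] by auto
  then have upper: "vec.dim ?H < CARD('n)"
    using vec_dim_diagonal_annihilator_less vec_dim_diagonal_matrices
    by (metis diagonal_annihilator_empty)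
  have spanning: "diagonal_matrices \<subseteq> vec.span (insert E ?H)"
  proof
    fix D :: "('a, 'n) square_matrix" assume D: "D \<in> diagonal_matrices"
    let ?c = "diagonal_weight D a / diagonal_weight E a"
    have "D - ?c *s E \<in> diagonal_matrices"
      using D E(1) by (simp add: diagonal_matrices_def)
    moreover have "diagonal_weight (D - ?c *s E) a = 0"
      using E(2) by simp
    ultimately have "D - ?c *s E \<in> ?H"
      by (simp add: diagonal_annihilator_def)
    then have "?c *s E + (D - ?c *s E) \<in> vec.span (insert E ?H)"
      by (intro vec.span_add vec.span_scale vec.span_base) simp_all
    then show "D \<in> vec.span (insert E ?H)" by simp
  qed
  have "CARD('n) \<le> vec.dim (insert E ?H)"
    using vec.dim_subset[OF spanning] by (simp add: vec_dim_diagonal_matrices vec.dim_span)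
  also have "\<dots> \<le> vec.dim ?H + 1"
    by (simp add: vec.dim_insert)
  finally show ?thesis
    using upper by linarith
qed

lemma diagonal_annihilator_pair_psubset:
  fixes a b :: "'n::finite \<Rightarrow> nat"
  assumes "a \<noteq> b" and "sum a UNIV = sum b UNIV"
  shows "diagonal_annihilator {a, b}
    \<subset> (diagonal_annihilator {a} :: ('a::field_char_0, 'n) square_matrix set)"
proof -
  have ex_less: "\<exists>i. x i < y i" if "sum x UNIV = sum y UNIV" "x \<noteq> y" for x y :: "'n \<Rightarrow> nat"
  proof (rule ccontr)
    assume "\<not> (\<exists>i. x i < y i)"
    then have le: "\<forall>i. y i \<le> x i" by (simp add: not_less)
    with that(2) obtain i where "y i < x i" by (metis ext le_neq_implies_less)
    then have "sum y UNIV < sum x UNIV" using le by (intro sum_strict_mono_ex1) auto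
    with that(1) show False by simp
  qed
  obtain i where i: "b i < a i" using ex_less assms by metis
  obtain j where j: "a j < b j" using ex_less assms by metis
  have "i \<noteq> j" using i j by auto
  define D :: "('a, 'n) square_matrix"
    where "D = of_nat (a j) *s axis (i, i) 1 - of_nat (a i) *s axis (j, j) 1"
  have weight: "diagonal_weight D m = of_nat (a j * m i) - of_nat (a i * m j)" for m
    by (simp add: D_def)
  have "D \<in> diagonal_matrices"
    using \<open>i \<noteq> j\<close> by (auto simp: D_def diagonal_matrices_def axis_def)
  moreover have "diagonal_weight D a = 0"
    by (simp add: weight mult.commute)
  moreover have "diagonal_weight D b \<noteq> 0"
  proof -
    have "a j * b i \<le> a i * a j" using i by simp
    also have "\<dots> < a i * b j" using i j by simp
    finally show ?thesis by (simp add: weight flip: of_nat_mult)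
  qed
  ultimately have "D \<in> diagonal_annihilator {a} - diagonal_annihilator {a, b}"
    by (simp add: diagonal_annihilator_def)
  then show ?thesis
    using diagonal_annihilator_antimono[of "{a}" "{a, b}"] by blast
qed

definition lie_action ::
    "('a::comm_ring_1, 'n::finite) square_matrix \<Rightarrow> ('a, 'n) mpoly_fun \<Rightarrow> ('a, 'n) mpoly_fun" where
  "lie_action A P = (\<lambda>m. \<Sum>i\<in>UNIV. \<Sum>j\<in>UNIV. A $ (i, j) * mult_var j (pderiv_var i P) m)"

lemma mem_lie_algebra_iff: "A \<in> lie_algebra P \<longleftrightarrow> lie_action A P = (\<lambda>_. 0)"
  by (simp add: lie_algebra_def lie_action_def fun_eq_iff)

lemma mult_var_pderiv_var_same: "mult_var i (pderiv_var i P) m = of_nat (m i) * P m"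
  by (cases "m i") (auto simp: mult_var_def pderiv_var_def fun_upd_idem)

lemma lie_action_diagonal:
  assumes "D \<in> diagonal_matrices"
  shows "lie_action D P m = diagonal_weight D m * P m"
proof -
  have "lie_action D P m = (\<Sum>i\<in>UNIV. D $ (i, i) * mult_var i (pderiv_var i P) m)"
    unfolding lie_action_def
  proof (rule sum.cong[OF refl])
    fix i
    have "(\<Sum>j\<in>UNIV - {i}. D $ (i, j) * mult_var j (pderiv_var i P) m) = 0"
      using assms by (auto simp: diagonal_matrices_def intro!: sum.neutral)
    then show "(\<Sum>j\<in>UNIV. D $ (i, j) * mult_var j (pderiv_var i P) m)
        = D $ (i, i) * mult_var i (pderiv_var i P) m"
      by (simp add: sum.remove[of UNIV i])
  qed
  then show ?thesis
    by (simp add: mult_var_pderiv_var_same diagonal_weight_def sum_distrib_right mult.assoc)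
qed

lemma lie_algebra_Int_diagonal_matrices:
  "lie_algebra P \<inter> diagonal_matrices = diagonal_annihilator {m. P m \<noteq> 0}"
  by (auto simp: mem_lie_algebra_iff diagonal_annihilator_def lie_action_diagonal fun_eq_iff)

lemma monomial_fun_0 [simp]: "monomial_fun 0 a = (\<lambda>_. 0)"
  by (simp add: monomial_fun_def)

lemma pderiv_var_monomial_fun:
  "pderiv_var i (monomial_fun c a) = monomial_fun (of_nat (a i) * c) (a(i := a i - 1))"
  by (cases "a i") (auto simp: pderiv_var_def monomial_fun_def fun_eq_iff)

lemma mult_var_monomial_fun: "mult_var j (monomial_fun c a) = monomial_fun c (a(j := a j + 1))"
  by (auto simp: mult_var_def monomial_fun_def fun_eq_iff)

lemma shifted_exponent_eq_iff:
  fixes a :: "'n \<Rightarrow> nat"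
  assumes "i \<noteq> j" and "a i \<ge> 1" and "a i' \<ge> 1"
  shows "(a(i := a i - 1))(j := a j + 1) = (a(i' := a i' - 1))(j' := (a(i' := a i' - 1)) j' + 1)
    \<longleftrightarrow> i' = i \<and> j' = j"
proof
  assume eq: "(a(i := a i - 1))(j := a j + 1) = (a(i' := a i' - 1))(j' := (a(i' := a i' - 1)) j' + 1)"
  have "j' = j"
  proof (rule ccontr)
    assume "j' \<noteq> j"
    then have "(a(i' := a i' - 1)) j = a j + 1"
      using fun_cong[OF eq, of j] by simp
    then show False
      by (cases "i' = j") auto
  qed
  moreover have "i' = i"
  proof (rule ccontr)
    assume "i' \<noteq> i"
    then have "a i = a i - 1"
      using fun_cong[OF eq, of i] \<open>j' = j\<close> assms(1) by simp
    then show False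
      using assms(2) by simp
  qed
  ultimately show "i' = i \<and> j' = j" by simp
qed (use assms in auto)

lemma axis_mem_lie_algebra:
  assumes "pderiv_var i P = (\<lambda>_. 0)"
  shows "axis (i, j) c \<in> lie_algebra P"
  unfolding mem_lie_algebra_iff lie_action_def
  by (auto simp: axis_def assms mult_var_def intro!: sum.neutral)

lemma lie_algebra_monomial_subset_diagonal_matrices:
  fixes c :: "'a::field_char_0"
  assumes "c \<noteq> 0" and "\<forall>i. a i \<ge> 1"
  shows "lie_algebra (monomial_fun c a :: ('a, 'n::finite) mpoly_fun) \<subseteq> diagonal_matrices"
proof
  fix A assume A: "A \<in> lie_algebra (monomial_fun c a :: ('a, 'n) mpoly_fun)"
  show "A \<in> diagonal_matrices" unfolding diagonal_matrices_def
  proof (intro CollectI allI impI)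
    fix i j :: 'n assume "i \<noteq> j"
    let ?m = "(a(i := a i - 1))(j := a j + 1)"
    have shifted_coeff: "mult_var j' (pderiv_var i' (monomial_fun c a)) ?m
        = (if i' = i \<and> j' = j then of_nat (a i) * c else 0)" for i' j'
    proof -
      have "?m = (a(i' := a i' - 1))(j' := (a(i' := a i' - 1)) j' + 1) \<longleftrightarrow> i' = i \<and> j' = j"
        by (intro shifted_exponent_eq_iff \<open>i \<noteq> j\<close> assms(2)[rule_format])
      then show ?thesis
        unfolding pderiv_var_monomial_fun mult_var_monomial_fun by (simp only: monomial_fun_def) auto
    qed
    have "0 = lie_action A (monomial_fun c a) ?m"
      using A by (simp add: mem_lie_algebra_iff)
    also have "\<dots> = (\<Sum>i'\<in>UNIV. \<Sum>j'\<in>UNIV.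
        if i' = i \<and> j' = j then A $ (i, j) * (of_nat (a i) * c) else 0)"
      unfolding lie_action_def shifted_coeff by (intro sum.cong refl) auto
    also have "\<dots> = A $ (i, j) * (of_nat (a i) * c)"
    proof -
      have "(\<Sum>j'\<in>UNIV. if i' = i \<and> j' = j then A $ (i, j) * (of_nat (a i) * c) else 0)
          = (if i' = i then A $ (i, j) * (of_nat (a i) * c) else 0)" for i'
        by (cases "i' = i") simp_all
      then show ?thesis by simp
    qed
    finally have "A $ (i, j) * (of_nat (a i) * c) = 0" ..
    moreover have "of_nat (a i) * c \<noteq> 0"
      using assms(1) assms(2)[rule_format, of i] by simp
    ultimately show "A $ (i, j) = 0" by simp
  qed
qed

lemma exponents_positive_if_lie_algebra_monomial_subset:
  assumes "a \<noteq> (\<lambda>_. 0)"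
    and "lie_algebra (monomial_fun c a :: ('a::field_char_0, 'n::finite) mpoly_fun) \<subseteq> diagonal_matrices"
  shows "a i \<ge> 1"
proof (rule ccontr)
  assume "\<not> a i \<ge> 1"
  then have "a i = 0" by simp
  then have "pderiv_var i (monomial_fun c a) = (\<lambda>_. 0)"
    by (simp add: pderiv_var_monomial_fun)
  moreover obtain k where "a k \<noteq> 0" using assms(1) by auto
  then have "axis (i, k) 1 \<notin> (diagonal_matrices :: ('a, 'n) square_matrix set)"
    using \<open>a i = 0\<close> by (auto simp: diagonal_matrices_def axis_def)
  ultimately show False
    using assms(2) axis_mem_lie_algebra by blast
qed

lemma support_singleton_if_lie_algebra_diagonal:
  fixes f :: "('a::field_char_0, 'n::finite) mpoly_fun"
  assumes "homogeneous_of_degree f d"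
    and "lie_algebra f \<subseteq> diagonal_matrices" and "vec.dim (lie_algebra f) = CARD('n) - 1"
  obtains a where "a \<noteq> (\<lambda>_. 0)" and "{m. f m \<noteq> 0} = {a}"
proof -
  let ?S = "{m. f m \<noteq> 0}"
  have lie: "lie_algebra f = diagonal_annihilator ?S"
    using assms(2) lie_algebra_Int_diagonal_matrices[of f] by blast
  obtain a where "a \<in> ?S" and a: "a \<noteq> (\<lambda>_. 0)"
  proof (rule ccontr)
    assume "\<not> thesis"
    with that have "?S \<subseteq> {\<lambda>_. 0}" by blast
    then have "lie_algebra f = diagonal_matrices"
      by (auto simp: lie diagonal_annihilator_def)
    then have "vec.dim (lie_algebra f) = CARD('n)"
      by (simp add: vec_dim_diagonal_matrices)
    moreover have "CARD('n) \<noteq> 0" by simp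
    ultimately show False
      using assms(3) by arith
  qed
  moreover have "b = a" if "b \<in> ?S" for b
  proof (rule ccontr)
    assume "b \<noteq> a"
    moreover have "sum a UNIV = sum b UNIV"
      using assms(1) \<open>a \<in> ?S\<close> \<open>b \<in> ?S\<close> by (simp add: homogeneous_of_degree_def)
    ultimately have
      "diagonal_annihilator {a, b} \<subset> (diagonal_annihilator {a} :: ('a, 'n) square_matrix set)"
      by (intro diagonal_annihilator_pair_psubset) auto
    then have
      "vec.dim (diagonal_annihilator {a, b} :: ('a, 'n) square_matrix set) < CARD('n) - 1"
      using vec_dim_diagonal_annihilator_less vec_dim_diagonal_annihilator_singleton[OF a]
      by metis
    moreover have "lie_algebra f \<subseteq> diagonal_annihilator {a, b}"
      unfolding lie using \<open>a \<in> ?S\<close> \<open>b \<in> ?S\<close> by (intro diagonal_annihilator_antimono) auto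
    then have
      "vec.dim (lie_algebra f) \<le> vec.dim (diagonal_annihilator {a, b} :: ('a, 'n) square_matrix set)"
      by (rule vec.dim_subset)
    ultimately show False
      using assms(3) by linarith
  qed
  ultimately show thesis
    using that a by blast
qed

theorem proposition5:
  fixes f :: "('a::field_char_0, 'n::finite) mpoly_fun" and d :: nat
  assumes "is_mpoly f" and "homogeneous_of_degree f d"
  shows "(\<exists>c a. c \<noteq> 0 \<and> (\<forall>i. a i \<ge> 1) \<and> f = monomial_fun c a)
     \<longleftrightarrow> (lie_algebra f \<subseteq> diagonal_matrices \<and> vec.dim (lie_algebra f) = CARD('n) - 1)"
proof
  assume "\<exists>c a. c \<noteq> 0 \<and> (\<forall>i. a i \<ge> 1) \<and> f = monomial_fun c a"
  then obtain c a where "c \<noteq> 0" and a: "\<forall>i. a i \<ge> 1" and f: "f = monomial_fun c a" by blast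
  then have diag: "lie_algebra f \<subseteq> diagonal_matrices"
    using lie_algebra_monomial_subset_diagonal_matrices by blast
  have "{m. f m \<noteq> 0} = {a}"
    using \<open>c \<noteq> 0\<close> by (auto simp: f monomial_fun_def)
  then have "lie_algebra f = diagonal_annihilator {a}"
    using diag lie_algebra_Int_diagonal_matrices[of f] by auto
  moreover have "a \<noteq> (\<lambda>_. 0)"
    using a by (metis not_one_le_zero)
  ultimately show "lie_algebra f \<subseteq> diagonal_matrices \<and> vec.dim (lie_algebra f) = CARD('n) - 1"
    using diag vec_dim_diagonal_annihilator_singleton by simp
next
  assume lie: "lie_algebra f \<subseteq> diagonal_matrices \<and> vec.dim (lie_algebra f) = CARD('n) - 1"
  then obtain a where a: "a \<noteq> (\<lambda>_. 0)" and S: "{m. f m \<noteq> 0} = {a}"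
    using support_singleton_if_lie_algebra_diagonal[OF assms(2)] by blast
  moreover have "f = monomial_fun (f a) a"
    using S by (auto simp: monomial_fun_def fun_eq_iff)
  ultimately obtain c where "c \<noteq> 0" and f: "f = monomial_fun c a"
    by blast
  moreover have "\<forall>i. a i \<ge> 1"
    using exponents_positive_if_lie_algebra_monomial_subset[OF a] lie unfolding f by blast
  ultimately show "\<exists>c a. c \<noteq> 0 \<and> (\<forall>i. a i \<ge> 1) \<and> f = monomial_fun c a"
    by blast
qed

end
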